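(* Assume Hypothesis (LD). Let $[x]_\rho\subset M_1$ be a closed $\rho$-basic class. Then for every $\theta>0$ there exists $\delta>0$ such that every tuple $\xi=(\xi_0,\dots,\xi_n)$ with $\xi_0,\xi_n\in[x]_\rho$ and $A_n(\xi)\le\delta$ satisfies $\xi_i\in N^\theta([x]_\rho)$ for all $i=0,\dots,n$.
   Context: Setting. Let $M\subset\mathbb{R}^d$ be closed; all topological notions are relative to $M$. Let $F:M\to M$ be continuous with $\|F\|:=\sup_{x\in M}\|F(x)\|<\infty$. For $A\subset M$ and $\delta>0$, put $N^\delta(A)=\{x\in M:\inf_{y\in A}\|x-y\|<\delta\}$, and let $d(x,y)=\max_i|x_i-y_i|$. Let $\{X^\varepsilon\}_{\varepsilon>0}$ be a family of time-homogeneous Markov chains on $M$ with transition kernels $p^\varepsilon(x,\Gamma)$. Assume $M=M_0\cup M_1$ (disjoint), where $M_0$ is closed, $F(M_0)\subseteq M_0$, $F(M_1)\subseteq M_1$, and $p^\varepsilon(x,M_1)=0$ for all $\varepsilon>0$ and $x\in M_0$. $\rho$-chain recurrence. Given $\rho:M\times M\to[0,+\infty]$, for $\xi=(\xi_0,\dots,\xi_n)\in M^{n+1}$ set $A_n(\xi)=\sum_{i=0}^{n-1}\rho(\xi_i,\xi_{i+1})$. Set $B_\rho(x,y)=\inf\{A_n(\xi):n\ge1,\ \xi\in M^{n+1},\ \xi_0=x,\ \xi_n=y\}$. Write $x<_\rho y$ if $B_\rho(x,y)=0$, and $x\sim_\rho y$ if $x<_\rho y$ and $y<_\rho x$. Let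 $\mathcal{R}_\rho=\{x:x\sim_\rho x\}$. The $\rho$-basic classes are the equivalence classes $[x]_\rho$ of $\sim_\rho$ on $\mathcal{R}_\rho$. Hypothesis (LD). There is $\rho:M\times M\to[0,+\infty]$ such that: (i) $\rho$ is continuous on $M_1\times M$; (ii) $\rho(x,y)=0$ iff $y=F(x)$; (iii) for every $\beta>0$, $\inf\{\rho(x,y):x,y\in M,\ d(F(x),y)>\beta\}>0$; (iv) lower bound: for every compact $K\subset M_1$, every open ball $U$ of $M$ and every $\eta>0$, there is $\varepsilon_0>0$ such that $\varepsilon\log p^\varepsilon(x,U)\ge-\inf_{y\in U}\rho(x,y)-\eta$ for all $x\in K$ and $\varepsilon<\varepsilon_0$; (v) upper bound: for every closed $C\subset M$ and every $\eta>0$, there is $\varepsilon_0>0$ such that $\varepsilon\log p^\varepsilon(x,C)\le-\inf_{y\in C}\rho(x,y)+\eta$ for all $x\in M$ and $\varepsilon<\varepsilon_0$. *)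

theory Defs
  imports "HOL-Probability.Probability"
begin

definition dmax :: "real^'d \<Rightarrow> real^'d \<Rightarrow> real" where
  "dmax x y = Max (range (\<lambda>i. \<bar>x $ i - y $ i\<bar>))"

definition nbhd :: "(real^'d) set \<Rightarrow> real \<Rightarrow> (real^'d) set \<Rightarrow> (real^'d) set" where
  "nbhd M \<delta> A = {x \<in> M. (INF y\<in>A. norm (x - y)) < \<delta>}"

definition eln :: "real \<Rightarrow> ereal" where
  "eln p = (if p > 0 then ereal (ln p) else -\<infinity>)"

definition action :: "('a \<Rightarrow> 'a \<Rightarrow> ereal) \<Rightarrow> nat \<Rightarrow> (nat \<Rightarrow> 'a) \<Rightarrow> ereal" where
  "action \<rho> n \<xi> = (\<Sum>i<n. \<rho> (\<xi> i) (\<xi> (Suc i)))"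

definition Bcost :: "'a set \<Rightarrow> ('a \<Rightarrow> 'a \<Rightarrow> ereal) \<Rightarrow> 'a \<Rightarrow> 'a \<Rightarrow> ereal" where
  "Bcost M \<rho> x y = (INF p \<in> {(n, \<xi>). n \<ge> 1 \<and> (\<forall>i\<le>n. \<xi> i \<in> M) \<and> \<xi> 0 = x \<and> \<xi> n = y}.
                        action \<rho> (fst p) (snd p))"

definition rho_less :: "'a set \<Rightarrow> ('a \<Rightarrow> 'a \<Rightarrow> ereal) \<Rightarrow> 'a \<Rightarrow> 'a \<Rightarrow> bool" where
  "rho_less M \<rho> x y \<longleftrightarrow> Bcost M \<rho> x y = 0"

definition rho_equiv :: "'a set \<Rightarrow> ('a \<Rightarrow> 'a \<Rightarrow> ereal) \<Rightarrow> 'a \<Rightarrow> 'a \<Rightarrow> bool" where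
  "rho_equiv M \<rho> x y \<longleftrightarrow> rho_less M \<rho> x y \<and> rho_less M \<rho> y x"

definition rho_recurrent :: "'a set \<Rightarrow> ('a \<Rightarrow> 'a \<Rightarrow> ereal) \<Rightarrow> 'a set" where
  "rho_recurrent M \<rho> = {x \<in> M. rho_equiv M \<rho> x x}"

definition basic_class :: "'a set \<Rightarrow> ('a \<Rightarrow> 'a \<Rightarrow> ereal) \<Rightarrow> 'a \<Rightarrow> 'a set" where
  "basic_class M \<rho> x = {y \<in> rho_recurrent M \<rho>. rho_equiv M \<rho> x y}"

end

theory Submission
  imports Defs
begin

(* The statement only concerns the cost function rho.  If for
   some theta there were chains of action at most 1/(k+1) from the class K back to K that
   leave the theta-neighbourhood, take the point a_k just before the first exit and the two
   following points b_k, c_k.  Since K is compact and separated from the closed set M0, a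
   subsequence of a_k converges to some u in M1; vanishing step costs force b_k -> F u and
   c_k -> F (F u) by (LD iii).  Splicing the chains and using continuity of rho (LD i) and
   rho(v, F v) = 0 (LD ii) shows that x reaches F u and F u reaches x at zero cost, so F u
   lies in K, contradicting that the b_k stay at distance theta from K. *)

section \<open>Chain actions and the chain cost\<close>

lemma action_nonneg:
  assumes "\<And>y z. \<rho> y z \<ge> 0"
  shows "action \<rho> n \<xi> \<ge> 0"
  unfolding action_def using assms by (simp add: sum_nonneg)

lemma action_step_le:
  assumes "\<And>y z. \<rho> y z \<ge> 0" and "j < n"
  shows "\<rho> (\<xi> j) (\<xi> (Suc j)) \<le> action \<rho> n \<xi>"
  unfolding action_def
  using assms sum_mono2[of "{..<n}" "{j}" "\<lambda>i. \<rho> (\<xi> i) (\<xi> (Suc i))"] by auto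

lemma action_prefix_le:
  assumes "\<And>y z. \<rho> y z \<ge> 0" and "m \<le> n"
  shows "action \<rho> m \<xi> \<le> action \<rho> n \<xi>"
  unfolding action_def
  using assms sum_mono2[of "{..<n}" "{..<m}" "\<lambda>i. \<rho> (\<xi> i) (\<xi> (Suc i))"] by auto

lemma action_suffix_le:
  assumes "\<And>y z. \<rho> y z \<ge> 0"
  shows "action \<rho> m (\<lambda>j. \<xi> (s + j)) \<le> action \<rho> (s + m) \<xi>"
proof (induction m)
  case 0
  show ?case using action_nonneg[OF assms] by (simp add: action_def)
next
  case (Suc m)
  then show ?case by (simp add: action_def add_right_mono)
qed

lemma action_append:
  assumes "\<eta> m = \<xi> 0"
  shows "action \<rho> (m + n) (\<lambda>j. if j \<le> m then \<eta> j else \<xi> (j - m))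
         = action \<rho> m \<eta> + action \<rho> n \<xi>"
proof (induction n)
  case 0
  then show ?case by (simp add: action_def)
next
  case (Suc n)
  have "(if m + n \<le> m then \<eta> (m + n) else \<xi> (m + n - m)) = \<xi> n" using assms by auto
  with Suc show ?case by (simp add: action_def add.assoc)
qed

lemma Bcost_nonneg:
  assumes "\<And>y z. \<rho> y z \<ge> 0"
  shows "Bcost M \<rho> a b \<ge> 0"
  unfolding Bcost_def by (auto intro!: INF_greatest action_nonneg assms)

lemma Bcost_le_action:
  assumes "n \<ge> 1" and "\<forall>i\<le>n. \<xi> i \<in> M"
  shows "Bcost M \<rho> (\<xi> 0) (\<xi> n) \<le> action \<rho> n \<xi>"
  unfolding Bcost_def using assms by (intro INF_lower2[of "(n, \<xi>)"]) auto

lemma ereal_le_INF_add_INF: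
  fixes f :: "'a \<Rightarrow> ereal" and g :: "'b \<Rightarrow> ereal"
  assumes bound: "\<And>s t. s \<in> S \<Longrightarrow> t \<in> T \<Longrightarrow> u \<le> f s + g t"
    and nonneg: "\<And>s. f s \<ge> 0" "\<And>t. g t \<ge> 0"
  shows "u \<le> (INF s\<in>S. f s) + (INF t\<in>T. g t)"
proof (cases "S = {} \<or> T = {}")
  case True
  have "(INF s\<in>S. f s) \<ge> 0" "(INF t\<in>T. g t) \<ge> 0"
    using nonneg by (auto intro: INF_greatest)
  with True show ?thesis by (auto simp: top_ereal_def)
next
  case False
  have "u \<le> (INF s\<in>S. INF t\<in>T. f s + g t)"
    using bound by (intro INF_greatest) auto
  also have "\<dots> = (INF s\<in>S. f s + (INF t\<in>T. g t))"
    using False nonneg by (simp add: INF_ereal_add_right)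
  also have "\<dots> = (INF s\<in>S. f s) + (INF t\<in>T. g t)"
    using False nonneg INF_greatest[of T 0 g]
    by (intro INF_ereal_add_left) auto
  finally show ?thesis .
qed

lemma Bcost_triangle:
  assumes nonneg: "\<And>y z. \<rho> y z \<ge> 0"
  shows "Bcost M \<rho> a c \<le> Bcost M \<rho> a b + Bcost M \<rho> b c"
  unfolding Bcost_def
proof (rule ereal_le_INF_add_INF)
  fix p q :: "nat \<times> (nat \<Rightarrow> 'a)"
  assume p: "p \<in> {(n, \<xi>). n \<ge> 1 \<and> (\<forall>i\<le>n. \<xi> i \<in> M) \<and> \<xi> 0 = a \<and> \<xi> n = b}"
    and q: "q \<in> {(n, \<xi>). n \<ge> 1 \<and> (\<forall>i\<le>n. \<xi> i \<in> M) \<and> \<xi> 0 = b \<and> \<xi> n = c}"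
  obtain m n :: nat and \<eta> \<xi> where pq: "p = (m, \<eta>)" "q = (n, \<xi>)" by force
  define \<zeta> where "\<zeta> j = (if j \<le> m then \<eta> j else \<xi> (j - m))" for j
  have "Bcost M \<rho> (\<zeta> 0) (\<zeta> (m + n)) \<le> action \<rho> (m + n) \<zeta>"
    using p q pq by (intro Bcost_le_action) (auto simp: \<zeta>_def)
  moreover have "\<zeta> 0 = a" "\<zeta> (m + n) = c" using p q pq by (auto simp: \<zeta>_def)
  moreover have "action \<rho> (m + n) \<zeta> = action \<rho> m \<eta> + action \<rho> n \<xi>"
    unfolding \<zeta>_def using p q pq by (intro action_append) auto
  ultimately show "(INF p \<in> {(n, \<xi>). n \<ge> 1 \<and> (\<forall>i\<le>n. \<xi> i \<in> M) \<and> \<xi> 0 = a \<and> \<xi> n = c}.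
                      action \<rho> (fst p) (snd p))
        \<le> action \<rho> (fst p) (snd p) + action \<rho> (fst q) (snd q)"
    using pq by (simp add: Bcost_def)
qed (use action_nonneg[OF nonneg] in auto)

lemma Bcost_via_prefix:
  assumes "\<forall>i\<le>m. \<xi> i \<in> M" and "y \<in> M"
  shows "Bcost M \<rho> (\<xi> 0) y \<le> action \<rho> m \<xi> + \<rho> (\<xi> m) y"
proof -
  let ?\<eta> = "\<xi>(Suc m := y)"
  have "(\<Sum>i<m. \<rho> (?\<eta> i) (?\<eta> (Suc i))) = (\<Sum>i<m. \<rho> (\<xi> i) (\<xi> (Suc i)))"
    by (rule sum.cong) auto
  then have "action \<rho> (Suc m) ?\<eta> = action \<rho> m \<xi> + \<rho> (\<xi> m) y"
    unfolding action_def by simp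
  moreover have "Bcost M \<rho> (?\<eta> 0) (?\<eta> (Suc m)) \<le> action \<rho> (Suc m) ?\<eta>"
    using assms by (intro Bcost_le_action) auto
  ultimately show ?thesis by simp
qed

lemma Bcost_via_suffix:
  assumes nonneg: "\<And>y z. \<rho> y z \<ge> 0"
    and chain: "\<forall>j\<le>n. \<xi> j \<in> M" and "y \<in> M" and "i < n"
  shows "Bcost M \<rho> y (\<xi> n) \<le> \<rho> y (\<xi> (Suc i)) + action \<rho> n \<xi>"
proof -
  obtain m where m: "n = Suc i + m" using \<open>i < n\<close> less_iff_Suc_add by auto
  define \<eta> where "\<eta> j = (if j = 0 then y else \<xi> (i + j))" for j
  have "Bcost M \<rho> (\<eta> 0) (\<eta> (Suc m)) \<le> action \<rho> (Suc m) \<eta>"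
    using assms m by (intro Bcost_le_action) (auto simp: \<eta>_def)
  moreover have "\<eta> 0 = y" "\<eta> (Suc m) = \<xi> n" using m by (auto simp: \<eta>_def)
  moreover have "action \<rho> (Suc m) \<eta> = \<rho> y (\<xi> (Suc i)) + action \<rho> m (\<lambda>j. \<xi> (Suc i + j))"
    unfolding action_def sum.lessThan_Suc_shift by (simp add: \<eta>_def)
  moreover have "action \<rho> m (\<lambda>j. \<xi> (Suc i + j)) \<le> action \<rho> n \<xi>"
    unfolding m by (rule action_suffix_le[OF nonneg])
  ultimately show ?thesis by (metis add_left_mono order_trans)
qed

lemma ereal_tendsto_zero_dominated:
  fixes f g :: "nat \<Rightarrow> ereal"
  assumes "\<And>k. 0 \<le> f k" "\<And>k. f k \<le> g k" and "g \<longlonglongrightarrow> 0"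
  shows "f \<longlonglongrightarrow> 0"
  by (rule tendsto_sandwich[OF _ _ tendsto_const \<open>g \<longlonglongrightarrow> 0\<close>]) (use assms in auto)

lemma ereal_zero_if_le_null_sequence:
  fixes B :: ereal and g :: "nat \<Rightarrow> ereal"
  assumes "0 \<le> B" "\<And>k. B \<le> g k" and "g \<longlonglongrightarrow> 0"
  shows "B = 0"
proof -
  have "B \<le> 0"
    by (rule tendsto_le[OF trivial_limit_sequentially \<open>g \<longlonglongrightarrow> 0\<close> tendsto_const])
       (use assms in auto)
  with \<open>0 \<le> B\<close> show ?thesis by simp
qed

section \<open>The deterministic hypotheses\<close>

lemma dmax_ge: "\<bar>a $ j - b $ j\<bar> \<le> dmax a b"
  unfolding dmax_def by (rule Max_ge) auto

lemma norm_le_dmax: "norm (a - b) \<le> real CARD('d) * dmax a (b :: real^'d)"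
proof -
  have "norm (a - b) \<le> (\<Sum>i\<in>UNIV. \<bar>(a - b) $ i\<bar>)" by (rule norm_le_l1_cart)
  also have "\<dots> \<le> (\<Sum>i\<in>(UNIV::'d set). dmax a b)"
    by (rule sum_mono) (simp add: dmax_ge)
  finally show ?thesis by simp
qed

locale rho_dynamics =
  fixes M M0 M1 :: "(real^'d) set"
    and F :: "real^'d \<Rightarrow> real^'d"
    and \<rho> :: "real^'d \<Rightarrow> real^'d \<Rightarrow> ereal"
  assumes M_closed: "closed M"
    and M_split: "M = M0 \<union> M1" "M0 \<inter> M1 = {}"
    and M0_closed: "closed M0"
    and F_cont: "continuous_on M F"
    and F_maps: "F ` M \<subseteq> M"
    and F_bounded: "\<exists>B. \<forall>y\<in>M. norm (F y) \<le> B"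
    and F_M1: "F ` M1 \<subseteq> M1"
    and rho_nonneg: "\<And>y z. \<rho> y z \<ge> 0"
    and rho_cont: "continuous_on (M1 \<times> M) (\<lambda>(y, z). \<rho> y z)"
    and rho_zero_iff: "\<And>y z. y \<in> M \<Longrightarrow> z \<in> M \<Longrightarrow> (\<rho> y z = 0 \<longleftrightarrow> z = F y)"
    and rho_gap: "\<And>\<beta>. \<beta> > 0 \<Longrightarrow>
          0 < (INF p \<in> {(y, z). y \<in> M \<and> z \<in> M \<and> dmax (F y) z > \<beta>}. \<rho> (fst p) (snd p))"
begin

lemma small_cost_near_image:
  assumes "\<beta> > 0"
  obtains c where "c > 0" "\<And>y z. y \<in> M \<Longrightarrow> z \<in> M \<Longrightarrow> \<rho> y z < c \<Longrightarrow> norm (F y - z) \<le> \<beta>"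
proof
  define \<beta>' where "\<beta>' = \<beta> / real CARD('d)"
  have "\<beta>' > 0" using assms by (simp add: \<beta>'_def)
  let ?c = "INF p \<in> {(y, z). y \<in> M \<and> z \<in> M \<and> dmax (F y) z > \<beta>'}. \<rho> (fst p) (snd p)"
  show "?c > 0" using rho_gap[OF \<open>\<beta>' > 0\<close>] .
  fix y z assume yz: "y \<in> M" "z \<in> M" "\<rho> y z < ?c"
  have "dmax (F y) z \<le> \<beta>'"
  proof (rule ccontr)
    assume "\<not> dmax (F y) z \<le> \<beta>'"
    then have "?c \<le> \<rho> y z" using yz by (intro INF_lower2[of "(y, z)"]) auto
    with yz show False by simp
  qed
  then have "real CARD('d) * dmax (F y) z \<le> \<beta>"
    by (simp add: \<beta>'_def field_simps)
  then show "norm (F y - z) \<le> \<beta>" using norm_le_dmax[of "F y" z] by linarith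
qed

lemma step_limit:
  assumes "\<And>k. p k \<in> M" "\<And>k. q k \<in> M" "p \<longlonglongrightarrow> v" "v \<in> M"
    and "(\<lambda>k. \<rho> (p k) (q k)) \<longlonglongrightarrow> 0"
  shows "q \<longlonglongrightarrow> F v"
proof -
  have "(F \<circ> p) \<longlonglongrightarrow> F v" using F_cont assms unfolding continuous_on_sequentially by blast
  moreover have "(\<lambda>k. q k - F (p k)) \<longlonglongrightarrow> 0"
  proof (rule LIMSEQ_I)
    fix e :: real assume "e > 0"
    then obtain c where c: "c > 0"
      "\<And>y z. y \<in> M \<Longrightarrow> z \<in> M \<Longrightarrow> \<rho> y z < c \<Longrightarrow> norm (F y - z) \<le> e / 2"
      using small_cost_near_image[of "e / 2"] by auto
    obtain k0 where "\<forall>k\<ge>k0. \<rho> (p k) (q k) < c"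
      using order_tendstoD(2)[OF assms(5) \<open>c > 0\<close>] unfolding eventually_sequentially by auto
    then have "norm (q k - F (p k) - 0) < e" if "k \<ge> k0" for k
      using c(2)[of "p k" "q k"] assms that \<open>e > 0\<close> by (auto simp: norm_minus_commute)
    then show "\<exists>k0. \<forall>k\<ge>k0. norm (q k - F (p k) - 0) < e" by blast
  qed
  ultimately show ?thesis using Lim_transform by (auto simp: o_def)
qed

lemma rho_tendsto:
  assumes "\<And>k. s k \<in> M1" "\<And>k. t k \<in> M" "s \<longlonglongrightarrow> s0" "t \<longlonglongrightarrow> t0" "s0 \<in> M1" "t0 \<in> M"
  shows "(\<lambda>k. \<rho> (s k) (t k)) \<longlonglongrightarrow> \<rho> s0 t0"
proof -
  have "(\<lambda>k. (s k, t k)) \<longlonglongrightarrow> (s0, t0)" using assms by (intro tendsto_Pair)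
  then have "((\<lambda>(y, z). \<rho> y z) \<circ> (\<lambda>k. (s k, t k))) \<longlonglongrightarrow> (\<lambda>(y, z). \<rho> y z) (s0, t0)"
    using rho_cont assms unfolding continuous_on_sequentially by (auto simp: mem_Times_iff)
  then show ?thesis by (simp add: o_def)
qed

text \<open>Since \<open>F\<close> is bounded, the end point of a sufficiently cheap chain lies in a fixed ball.\<close>

lemma cheap_target_bounded:
  obtains c R where "c > 0" "\<And>a z. a \<in> M \<Longrightarrow> z \<in> M \<Longrightarrow> Bcost M \<rho> a z < c \<Longrightarrow> norm z \<le> R"
proof -
  obtain B where B: "\<forall>y\<in>M. norm (F y) \<le> B" using F_bounded by auto
  obtain c where c: "c > 0" "\<And>y z. y \<in> M \<Longrightarrow> z \<in> M \<Longrightarrow> \<rho> y z < c \<Longrightarrow> norm (F y - z) \<le> 1"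
    using small_cost_near_image[of 1] by auto
  have "norm z \<le> B + 1" if "a \<in> M" "z \<in> M" "Bcost M \<rho> a z < c" for a z
  proof -
    obtain n \<xi> where chain: "n \<ge> 1" "\<forall>i\<le>n. \<xi> i \<in> M" "\<xi> n = z" and act: "action \<rho> n \<xi> < c"
      using \<open>Bcost M \<rho> a z < c\<close> unfolding Bcost_def INF_less_iff by auto
    then obtain m where m: "n = Suc m" by (cases n) auto
    have "\<rho> (\<xi> m) z < c"
      using action_step_le[of \<rho> m n \<xi>, OF rho_nonneg] act chain m by simp
    then have "norm (F (\<xi> m) - z) \<le> 1" using c chain m that by auto
    moreover have "norm (F (\<xi> m)) \<le> B" using B chain m by auto
    ultimately show ?thesis using norm_triangle_sub[of z "F (\<xi> m)"] by (simp add: norm_minus_commute)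
  qed
  then show ?thesis using that c(1) by blast
qed

end

section \<open>Cheap chains near a closed basic class\<close>

locale rho_basic_class = rho_dynamics M M0 M1 F \<rho>
  for M M0 M1 :: "(real^'d) set" and F :: "real^'d \<Rightarrow> real^'d"
    and \<rho> :: "real^'d \<Rightarrow> real^'d \<Rightarrow> ereal" +
  fixes x :: "real^'d"
  assumes x_rec: "x \<in> rho_recurrent M \<rho>"
    and class_closed: "closed (basic_class M \<rho> x)"
    and class_M1: "basic_class M \<rho> x \<subseteq> M1"
begin

abbreviation K :: "(real^'d) set" where "K \<equiv> basic_class M \<rho> x"

lemma class_subset_M: "K \<subseteq> M"
  unfolding basic_class_def rho_recurrent_def by auto

lemma x_in_class: "x \<in> K"
  using x_rec unfolding basic_class_def rho_recurrent_def by auto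

lemma class_costs_zero:
  assumes "z \<in> K"
  shows "Bcost M \<rho> x z = 0" "Bcost M \<rho> z x = 0"
  using assms unfolding basic_class_def rho_equiv_def rho_less_def by auto

lemma in_class_if_costs_zero:
  assumes "y \<in> M" "Bcost M \<rho> x y = 0" "Bcost M \<rho> y x = 0"
  shows "y \<in> K"
proof -
  have "Bcost M \<rho> y y \<le> Bcost M \<rho> y x + Bcost M \<rho> x y" by (rule Bcost_triangle[OF rho_nonneg])
  then have "Bcost M \<rho> y y = 0" using assms Bcost_nonneg[of \<rho> M y y, OF rho_nonneg] by simp
  then show ?thesis using assms
    unfolding basic_class_def rho_recurrent_def rho_equiv_def rho_less_def by simp
qed

text \<open>The class is bounded (its points are ends of cheap chains from \<open>x\<close>), hence compact.\<close>

lemma class_compact: "compact K"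
proof -
  obtain c R where c: "c > 0" "\<And>a z. a \<in> M \<Longrightarrow> z \<in> M \<Longrightarrow> Bcost M \<rho> a z < c \<Longrightarrow> norm z \<le> R"
    using cheap_target_bounded by blast
  have "norm z \<le> R" if "z \<in> K" for z
    using c(2)[of x z] c(1) class_costs_zero(1)[OF that] x_in_class class_subset_M that by auto
  then have "K \<subseteq> cball 0 R" by auto
  then have "bounded K" using bounded_cball bounded_subset by blast
  then show ?thesis using class_closed compact_eq_bounded_closed by blast
qed

lemma nbhd_class_eq: "nbhd M e K = {z \<in> M. infdist z K < e}"
proof -
  have "K \<noteq> {}" using x_in_class by auto
  then show ?thesis unfolding nbhd_def by (simp add: infdist_notempty dist_norm)
qed

lemma class_margin:
  obtains d where "d > 0" "\<And>z. z \<in> M \<Longrightarrow> infdist z K < d \<Longrightarrow> z \<in> M1"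
proof -
  obtain d where "d > 0" and sep: "\<forall>a\<in>K. \<forall>b\<in>M0. d \<le> dist a b"
    using separate_compact_closed[OF class_compact M0_closed] class_M1 M_split by blast
  have "z \<in> M1" if "z \<in> M" "infdist z K < d" for z
  proof (rule ccontr)
    assume "z \<notin> M1"
    then have "z \<in> M0" using that M_split by auto
    obtain w where "w \<in> K" "infdist z K = dist z w"
      using infdist_attains_inf[OF class_closed] x_in_class by blast
    moreover have "d \<le> dist w z" using sep \<open>w \<in> K\<close> \<open>z \<in> M0\<close> by blast
    ultimately show False using that by (simp add: dist_commute)
  qed
  then show ?thesis using that \<open>d > 0\<close> by blast
qed

lemma chain_cost_bounds:
  assumes chain: "\<forall>i\<le>n. \<xi> i \<in> M" "\<xi> 0 \<in> K" "\<xi> n \<in> K" and "m < n" "y \<in> M"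
  shows "Bcost M \<rho> x y \<le> action \<rho> n \<xi> + \<rho> (\<xi> m) y"
    and "Bcost M \<rho> y x \<le> \<rho> y (\<xi> (Suc m)) + action \<rho> n \<xi>"
proof -
  have "Bcost M \<rho> x y \<le> Bcost M \<rho> x (\<xi> 0) + Bcost M \<rho> (\<xi> 0) y"
    by (rule Bcost_triangle[OF rho_nonneg])
  also have "\<dots> \<le> action \<rho> m \<xi> + \<rho> (\<xi> m) y"
    using class_costs_zero(1)[OF chain(2)] Bcost_via_prefix[of m \<xi> M y \<rho>] assms by simp
  also have "\<dots> \<le> action \<rho> n \<xi> + \<rho> (\<xi> m) y"
    using action_prefix_le[of \<rho> m n \<xi>, OF rho_nonneg] \<open>m < n\<close> by (simp add: add_right_mono)
  finally show "Bcost M \<rho> x y \<le> action \<rho> n \<xi> + \<rho> (\<xi> m) y" .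
  have "Bcost M \<rho> y x \<le> Bcost M \<rho> y (\<xi> n) + Bcost M \<rho> (\<xi> n) x"
    by (rule Bcost_triangle[OF rho_nonneg])
  also have "\<dots> \<le> \<rho> y (\<xi> (Suc m)) + action \<rho> n \<xi>"
    using class_costs_zero(2)[OF chain(3)] Bcost_via_suffix[OF rho_nonneg] assms by simp
  finally show "Bcost M \<rho> y x \<le> \<rho> y (\<xi> (Suc m)) + action \<rho> n \<xi>" .
qed

definition escaping_chain :: "real \<Rightarrow> ereal \<Rightarrow> nat \<Rightarrow> (nat \<Rightarrow> real^'d) \<Rightarrow> nat \<Rightarrow> bool" where
  "escaping_chain \<theta> e n \<xi> j \<longleftrightarrow> (\<forall>i\<le>n. \<xi> i \<in> M) \<and> \<xi> 0 \<in> K \<and> \<xi> n \<in> K \<and>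
     action \<rho> n \<xi> \<le> e \<and> Suc j < n \<and> infdist (\<xi> j) K < \<theta> \<and> \<not> infdist (\<xi> (Suc j)) K < \<theta>"

lemma chain_first_exit:
  assumes "\<forall>i\<le>n. \<xi> i \<in> M" "\<xi> 0 \<in> K" "\<xi> n \<in> K" "action \<rho> n \<xi> \<le> e"
    and "i \<le> n" "\<not> infdist (\<xi> i) K < \<theta>" "\<theta> > 0"
  obtains j where "escaping_chain \<theta> e n \<xi> j"
proof -
  have "infdist (\<xi> 0) K < \<theta>" using assms by simp
  then obtain j where "j < i" "\<forall>l\<le>j. infdist (\<xi> l) K < \<theta>" "\<not> infdist (\<xi> (Suc j)) K < \<theta>"
    using ex_least_nat_less[of "\<lambda>l. \<not> infdist (\<xi> l) K < \<theta>" i] assms(6) by auto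
  moreover have "Suc j \<noteq> n" using assms(3,7) calculation(3) by auto
  ultimately show ?thesis
    using that[of j] assms(1-5) unfolding escaping_chain_def by simp
qed

lemma escaping_chain_costs:
  assumes "escaping_chain \<theta> e n \<xi> j"
  shows "\<rho> (\<xi> j) (\<xi> (Suc j)) \<le> e" "\<rho> (\<xi> (Suc j)) (\<xi> (Suc (Suc j))) \<le> e"
    and "y \<in> M \<Longrightarrow> Bcost M \<rho> x y \<le> e + \<rho> (\<xi> j) y"
    and "y \<in> M \<Longrightarrow> Bcost M \<rho> y x \<le> \<rho> y (\<xi> (Suc (Suc j))) + e"
proof -
  have chain: "\<forall>i\<le>n. \<xi> i \<in> M" "\<xi> 0 \<in> K" "\<xi> n \<in> K" "Suc j < n"
    and cheap: "action \<rho> n \<xi> \<le> e"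
    using assms unfolding escaping_chain_def by auto
  show "\<rho> (\<xi> j) (\<xi> (Suc j)) \<le> e" "\<rho> (\<xi> (Suc j)) (\<xi> (Suc (Suc j))) \<le> e"
    using action_step_le[of \<rho> j n \<xi>, OF rho_nonneg] action_step_le[of \<rho> "Suc j" n \<xi>, OF rho_nonneg]
      chain(4) cheap by auto
  assume "y \<in> M"
  have "Bcost M \<rho> x y \<le> action \<rho> n \<xi> + \<rho> (\<xi> j) y"
    using chain by (intro chain_cost_bounds(1) \<open>y \<in> M\<close>) auto
  then show "Bcost M \<rho> x y \<le> e + \<rho> (\<xi> j) y"
    using add_right_mono[OF cheap] order_trans by blast
  have "Bcost M \<rho> y x \<le> \<rho> y (\<xi> (Suc (Suc j))) + action \<rho> n \<xi>"
    using chain by (intro chain_cost_bounds(2) \<open>y \<in> M\<close>) auto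
  then show "Bcost M \<rho> y x \<le> \<rho> y (\<xi> (Suc (Suc j))) + e"
    using add_left_mono[OF cheap] order_trans by blast
qed

lemma near_class_subseq:
  fixes a :: "nat \<Rightarrow> real^'d"
  assumes "\<And>k. a k \<in> M" "\<And>k. infdist (a k) K < \<theta>"
  obtains u r where "u \<in> M" "infdist u K \<le> \<theta>" "strict_mono r" "(a \<circ> r) \<longlonglongrightarrow> u"
proof -
  have "\<theta> > 0" using assms(2)[of 0] infdist_nonneg[of "a 0" K] by linarith
  let ?S = "M \<inter> {z. infdist z K \<le> \<theta>}"
  have "compact ?S"
    using x_in_class by (intro closed_Int_compact M_closed compact_infdist_le class_compact \<open>\<theta> > 0\<close>) auto
  moreover have "a k \<in> ?S" for k using assms less_imp_le by auto
  ultimately obtain u r where "u \<in> ?S" "strict_mono r" "(a \<circ> r) \<longlonglongrightarrow> u"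
    unfolding compact_def by blast
  then show ?thesis using that by auto
qed

text \<open>Along a subsequence
  \<open>a_k \<rightarrow> u \<in> M1\<close>, so \<open>b_k \<rightarrow> F u\<close> and \<open>c_k \<rightarrow> F (F u)\<close>; by continuity of \<open>\<rho>\<close> both costs
  between \<open>x\<close> and \<open>F u\<close> vanish, i.e. \<open>F u\<close> belongs to the class.\<close>

lemma escape_limit_in_class:
  fixes a b c :: "nat \<Rightarrow> real^'d" and \<epsilon> :: "nat \<Rightarrow> ereal"
  assumes margin: "\<And>z. z \<in> M \<Longrightarrow> infdist z K < d \<Longrightarrow> z \<in> M1" and "\<theta> < d"
    and in_M: "\<And>k. a k \<in> M" "\<And>k. b k \<in> M" "\<And>k. c k \<in> M"
    and near: "\<And>k. infdist (a k) K < \<theta>"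
    and \<epsilon>: "\<epsilon> \<longlonglongrightarrow> 0"
    and steps: "\<And>k. \<rho> (a k) (b k) \<le> \<epsilon> k" "\<And>k. \<rho> (b k) (c k) \<le> \<epsilon> k"
    and costs: "\<And>k y. y \<in> M \<Longrightarrow> Bcost M \<rho> x y \<le> \<epsilon> k + \<rho> (a k) y"
      "\<And>k y. y \<in> M \<Longrightarrow> Bcost M \<rho> y x \<le> \<rho> y (c k) + \<epsilon> k"
  obtains y r where "y \<in> K" "strict_mono r" "(b \<circ> r) \<longlonglongrightarrow> y"
proof -
  obtain u r where u: "u \<in> M" "infdist u K \<le> \<theta>" and r: "strict_mono r" "(a \<circ> r) \<longlonglongrightarrow> u"
    using near_class_subseq[of a \<theta>] in_M(1) near by metis
  have "u \<in> M1" using margin[of u] u \<open>\<theta> < d\<close> by linarith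
  have a_M1: "a k \<in> M1" for k using margin[OF in_M(1) less_trans[OF near \<open>\<theta> < d\<close>]] .
  define y where "y = F u"
  have y: "y \<in> M" "y \<in> M1" using F_maps F_M1 u \<open>u \<in> M1\<close> by (auto simp: y_def)
  have \<epsilon>r: "(\<lambda>k. \<epsilon> (r k)) \<longlonglongrightarrow> 0" using LIMSEQ_subseq_LIMSEQ[OF \<epsilon> r(1)] by (simp add: o_def)
  have "(\<lambda>k. \<rho> (a (r k)) (b (r k))) \<longlonglongrightarrow> 0"
    using rho_nonneg steps(1) by (intro ereal_tendsto_zero_dominated[OF _ _ \<epsilon>r])
  then have b_lim: "(\<lambda>k. b (r k)) \<longlonglongrightarrow> y"
    unfolding y_def using in_M u r by (intro step_limit[of "\<lambda>k. a (r k)"]) (auto simp: o_def)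
  have "(\<lambda>k. \<rho> (b (r k)) (c (r k))) \<longlonglongrightarrow> 0"
    using rho_nonneg steps(2) by (intro ereal_tendsto_zero_dominated[OF _ _ \<epsilon>r])
  then have c_lim: "(\<lambda>k. c (r k)) \<longlonglongrightarrow> F y"
    using in_M y b_lim by (intro step_limit[of "\<lambda>k. b (r k)"]) auto
  have "(\<lambda>k. \<rho> (a (r k)) y) \<longlonglongrightarrow> \<rho> u y"
    using a_M1 in_M y u \<open>u \<in> M1\<close> r by (intro rho_tendsto) (auto simp: o_def)
  then have "(\<lambda>k. \<epsilon> (r k) + \<rho> (a (r k)) y) \<longlonglongrightarrow> 0 + \<rho> u y"
    using rho_nonneg[of u y] by (intro tendsto_add_ereal_nonneg[OF _ _ \<epsilon>r]) auto
  moreover have "\<rho> u y = 0" using rho_zero_iff u y by (simp add: y_def)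
  ultimately have "Bcost M \<rho> x y = 0"
    using costs(1) y Bcost_nonneg[of \<rho> M x y, OF rho_nonneg]
    by (intro ereal_zero_if_le_null_sequence[of _ "\<lambda>k. \<epsilon> (r k) + \<rho> (a (r k)) y"]) auto
  have "(\<lambda>k. \<rho> y (c (r k))) \<longlonglongrightarrow> \<rho> y (F y)"
    using in_M y c_lim F_maps by (intro rho_tendsto) auto
  then have "(\<lambda>k. \<rho> y (c (r k)) + \<epsilon> (r k)) \<longlonglongrightarrow> \<rho> y (F y) + 0"
    using rho_nonneg[of y "F y"] by (intro tendsto_add_ereal_nonneg[OF _ _ _ \<epsilon>r]) auto
  moreover have "\<rho> y (F y) = 0" using rho_zero_iff y F_maps by auto
  ultimately have "Bcost M \<rho> y x = 0"
    using costs(2) y Bcost_nonneg[of \<rho> M y x, OF rho_nonneg]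
    by (intro ereal_zero_if_le_null_sequence[of _ "\<lambda>k. \<rho> y (c (r k)) + \<epsilon> (r k)"]) auto
  then have "y \<in> K" using in_class_if_costs_zero y \<open>Bcost M \<rho> x y = 0\<close> by blast
  then show ?thesis using that r b_lim by (auto simp: o_def)
qed

text \<open>Escaping chains of arbitrarily small action are impossible: their exit steps would
  produce, via the previous lemma, points outside the neighbourhood converging to a point of
  the class.\<close>

lemma no_cheap_escaping_chains:
  assumes margin: "\<And>z. z \<in> M \<Longrightarrow> infdist z K < d \<Longrightarrow> z \<in> M1" and "0 < \<theta>" "\<theta> < d"
  shows "\<exists>\<delta>>0. \<forall>n \<xi> j. \<not> escaping_chain \<theta> (ereal \<delta>) n \<xi> j"
proof (rule ccontr)
  assume "\<not> ?thesis"
  then have "\<exists>n \<xi> j. escaping_chain \<theta> (ereal (inverse (Suc k))) n \<xi> j" for k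
    by (metis inverse_positive_iff_positive of_nat_0_less_iff zero_less_Suc)
  then obtain N X J where esc: "\<And>k. escaping_chain \<theta> (ereal (inverse (Suc k))) (N k) (X k) (J k)"
    by metis
  define \<epsilon> where "\<epsilon> k = ereal (inverse (Suc k))" for k
  have "\<epsilon> \<longlonglongrightarrow> 0"
    unfolding \<epsilon>_def zero_ereal_def by (intro tendsto_ereal LIMSEQ_inverse_real_of_nat)
  let ?a = "\<lambda>k. X k (J k)" and ?b = "\<lambda>k. X k (Suc (J k))" and ?c = "\<lambda>k. X k (Suc (Suc (J k)))"
  have in_M: "?a k \<in> M" "?b k \<in> M" "?c k \<in> M"
    and near: "infdist (?a k) K < \<theta>" and far: "\<theta> \<le> infdist (?b k) K" for k
    using esc[of k] unfolding escaping_chain_def by auto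
  have steps: "\<rho> (?a k) (?b k) \<le> \<epsilon> k" "\<rho> (?b k) (?c k) \<le> \<epsilon> k"
    and costs: "y \<in> M \<Longrightarrow> Bcost M \<rho> x y \<le> \<epsilon> k + \<rho> (?a k) y"
      "y \<in> M \<Longrightarrow> Bcost M \<rho> y x \<le> \<rho> y (?c k) + \<epsilon> k" for k y
    using escaping_chain_costs[OF esc[of k]] unfolding \<epsilon>_def by auto
  obtain y r where "y \<in> K" "strict_mono r" and b_lim: "(?b \<circ> r) \<longlonglongrightarrow> y"
    by (rule escape_limit_in_class[OF margin \<open>\<theta> < d\<close> in_M near \<open>\<epsilon> \<longlonglongrightarrow> 0\<close> steps costs])
  have "\<theta> \<le> infdist y K"
  proof (rule tendsto_lowerbound[OF _ _ trivial_limit_sequentially])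
    show "(\<lambda>k. infdist ((?b \<circ> r) k) K) \<longlonglongrightarrow> infdist y K" by (intro tendsto_infdist b_lim)
    show "\<forall>\<^sub>F k in sequentially. \<theta> \<le> infdist ((?b \<circ> r) k) K" using far by simp
  qed
  then show False using infdist_zero[OF \<open>y \<in> K\<close>] \<open>0 < \<theta>\<close> by linarith
qed

text \<open>The theorem inside the locale. The neighbourhood radius is shrunk below the margin
  separating the class from \<open>M0\<close>; a cheap chain leaving the smaller neighbourhood would be
  escaping.\<close>

lemma chains_stay_near_class:
  assumes "\<theta> > 0"
  shows "\<exists>\<delta>>0. \<forall>n \<xi>. (\<forall>i\<le>n. \<xi> i \<in> M) \<and> \<xi> 0 \<in> K \<and> \<xi> n \<in> K \<and>
            action \<rho> n \<xi> \<le> ereal \<delta> \<longrightarrow> (\<forall>i\<le>n. \<xi> i \<in> nbhd M \<theta> K)"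
proof -
  obtain d where "d > 0" and margin: "\<And>z. z \<in> M \<Longrightarrow> infdist z K < d \<Longrightarrow> z \<in> M1"
    using class_margin by blast
  define \<theta>' where "\<theta>' = min \<theta> (d / 2)"
  have \<theta>': "0 < \<theta>'" "\<theta>' \<le> \<theta>" "\<theta>' < d" using assms \<open>d > 0\<close> by (auto simp: \<theta>'_def)
  obtain \<delta> where "\<delta> > 0" and no_escape: "\<And>n \<xi> j. \<not> escaping_chain \<theta>' (ereal \<delta>) n \<xi> j"
    using no_cheap_escaping_chains[OF margin \<theta>'(1,3)] by blast
  have "\<xi> i \<in> nbhd M \<theta> K"
    if "\<forall>i\<le>n. \<xi> i \<in> M" "\<xi> 0 \<in> K" "\<xi> n \<in> K" "action \<rho> n \<xi> \<le> ereal \<delta>" "i \<le> n" for n \<xi> i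
  proof -
    have "infdist (\<xi> i) K < \<theta>'"
      using chain_first_exit[OF that _ \<theta>'(1)] no_escape by metis
    then show ?thesis using that \<theta>'(2) by (simp add: nbhd_class_eq)
  qed
  with \<open>\<delta> > 0\<close> show ?thesis by blast
qed

end

theorem mainTheorem11:
  fixes M M0 M1 :: "(real^'d) set"
    and F :: "real^'d \<Rightarrow> real^'d"
    and P :: "real \<Rightarrow> real^'d \<Rightarrow> (real^'d) measure"
    and \<rho> :: "real^'d \<Rightarrow> real^'d \<Rightarrow> ereal"
    and x :: "real^'d"
  assumes M_closed: "closed M"
    and M_split: "M = M0 \<union> M1" "M0 \<inter> M1 = {}"
    and M0_closed: "closed M0"
    and F_cont: "continuous_on M F"
    and F_maps: "F ` M \<subseteq> M"
    and F_bounded: "\<exists>B. \<forall>y\<in>M. norm (F y) \<le> B"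
    and F_M0: "F ` M0 \<subseteq> M0"
    and F_M1: "F ` M1 \<subseteq> M1"
    and P_kernel: "\<And>\<epsilon>. \<epsilon> > 0 \<Longrightarrow>
          P \<epsilon> \<in> measurable (restrict_space borel M) (subprob_algebra (restrict_space borel M))"
    and P_prob: "\<And>\<epsilon> y. \<epsilon> > 0 \<Longrightarrow> y \<in> M \<Longrightarrow> prob_space (P \<epsilon> y)"
    and P_M0: "\<And>\<epsilon> y. \<epsilon> > 0 \<Longrightarrow> y \<in> M0 \<Longrightarrow> measure (P \<epsilon> y) M1 = 0"
    and rho_nonneg: "\<And>y z. \<rho> y z \<ge> 0"
    and LD_i: "continuous_on (M1 \<times> M) (\<lambda>(y, z). \<rho> y z)"
    and LD_ii: "\<And>y z. y \<in> M \<Longrightarrow> z \<in> M \<Longrightarrow> (\<rho> y z = 0 \<longleftrightarrow> z = F y)"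
    and LD_iii: "\<And>\<beta>. \<beta> > 0 \<Longrightarrow>
          0 < (INF p \<in> {(y, z). y \<in> M \<and> z \<in> M \<and> dmax (F y) z > \<beta>}. \<rho> (fst p) (snd p))"
    and LD_iv: "\<And>K c r \<eta>. compact K \<Longrightarrow> K \<subseteq> M1 \<Longrightarrow> c \<in> M \<Longrightarrow> r > 0 \<Longrightarrow> \<eta> > 0 \<Longrightarrow>
          \<exists>\<epsilon>0>0. \<forall>y\<in>K. \<forall>\<epsilon>. 0 < \<epsilon> \<and> \<epsilon> < \<epsilon>0 \<longrightarrow>
             ereal \<epsilon> * eln (measure (P \<epsilon> y) {z \<in> M. norm (z - c) < r})
               \<ge> - (INF z \<in> {z \<in> M. norm (z - c) < r}. \<rho> y z) - ereal \<eta>"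
    and LD_v: "\<And>C \<eta>. closed C \<Longrightarrow> C \<subseteq> M \<Longrightarrow> \<eta> > 0 \<Longrightarrow>
          \<exists>\<epsilon>0>0. \<forall>y\<in>M. \<forall>\<epsilon>. 0 < \<epsilon> \<and> \<epsilon> < \<epsilon>0 \<longrightarrow>
             ereal \<epsilon> * eln (measure (P \<epsilon> y) C)
               \<le> - (INF z \<in> C. \<rho> y z) + ereal \<eta>"
    and x_rec: "x \<in> rho_recurrent M \<rho>"
    and class_closed: "closed (basic_class M \<rho> x)"
    and class_M1: "basic_class M \<rho> x \<subseteq> M1"
  shows "\<forall>\<theta>>0. \<exists>\<delta>>0. \<forall>n \<xi>. (\<forall>i\<le>n. \<xi> i \<in> M) \<and>
            \<xi> 0 \<in> basic_class M \<rho> x \<and> \<xi> n \<in> basic_class M \<rho> x \<and>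
            action \<rho> n \<xi> \<le> ereal \<delta> \<longrightarrow>
            (\<forall>i\<le>n. \<xi> i \<in> nbhd M \<theta> (basic_class M \<rho> x))"
proof -
  interpret rho_basic_class M M0 M1 F \<rho> x
    by unfold_locales
      (fact M_closed M_split M0_closed F_cont F_maps F_bounded F_M1 rho_nonneg LD_i LD_ii LD_iii
        x_rec class_closed class_M1)+
  show ?thesis using chains_stay_near_class by blast
qed

end
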